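(* Let $Q$ be a probability distribution on the partition space $\mathcal{P}$ and let $X_1,\dots,X_n$ be drawn i.i.d. from $Q$ (for each $n$). Suppose that $\rho:\mathcal{P}\times\mathcal{P}\to\mathbb{R}$ is continuous in both arguments with respect to $\delta_2$. Then (1) $D(\mathcal{F}_n,\mathcal{F}_Q)\to0$ almost surely, and (2) $V_n\to V_Q$ almost surely, as $n\to\infty$.
   Context: Fix $1\le\ell\le m$. $\mathcal{X} = \{\mathbf{X}\in[0,1]^{\ell\times m} : \mathbf{X}^T\mathbf{1}_\ell = \mathbf{1}_m\}$; $\Pi$ is the group of $\ell\times\ell$ permutation matrices acting by left multiplication; the partition space $\mathcal{P}=\mathcal{X}/\Pi$ is the set of orbits $X=\{\mathbf{P}\mathbf{X}:\mathbf{P}\in\Pi\}$. The metric $\delta_2$ on $\mathcal{P}$ is $\delta_2(X,Y)=\min\{\|\mathbf{X}-\mathbf{Y}\|_2:\mathbf{X}\in X,\mathbf{Y}\in Y\}$ with $\|\cdot\|_2$ the Frobenius norm. For subsets $\mathcal{U},\mathcal{V}\subseteq\mathcal{P}$, $D(\mathcal{U},\mathcal{V})=\sup_{X\in\mathcal{U}}\inf_{Y\in\mathcal{V}}\delta_2(X,Y)$. The Fréchet function of the sample is $F_n(Z)=\frac1n\sum_{i=1}^n\rho(X_i,Z)$, $V_n=\inf_Z F_n(Z)$, $\mathcal{F}_n$ the set of minimizers of $F_n$; the expected Fréchet function is $F_Q(Z)=\int_{\mathcal{P}}\rho(X,Z)\,dQ(X)$, $V_Q=\inf_Z F_Q(Z)$,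 $\mathcal{F}_Q$ the set of minimizers of $F_Q$. *)

theory Defs
  imports "HOL-Probability.Probability"
begin

text \<open>Matrices in [0,1]^(l x m) with rows indexed by 'l and columns by 'm;
  entry (i,j) is X $ i $ j.  The Frobenius norm is the norm on real^'m^'l.\<close>

definition Xspace :: "(real^'m^'l) set" where
  "Xspace = {X. (\<forall>i j. 0 \<le> X $ i $ j \<and> X $ i $ j \<le> 1) \<and>
                 (\<forall>j. (\<Sum>i\<in>UNIV. X $ i $ j) = 1)}"

definition perm_matrices :: "(real^'l^'l) set" where
  "perm_matrices = {P. \<exists>\<sigma>. \<sigma> permutes (UNIV :: 'l set) \<and>
                        P = (\<chi> i j. if \<sigma> i = j then 1 else 0)}"

definition orbit :: "real^'m^'l \<Rightarrow> (real^'m^'l) set" where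
  "orbit X = {P ** X | P. P \<in> perm_matrices}"

definition Pspace :: "(real^'m^'l) set set" where
  "Pspace = orbit ` Xspace"

definition delta2 :: "(real^'m^'l) set \<Rightarrow> (real^'m^'l) set \<Rightarrow> real" where
  "delta2 A B = Inf {norm (X - Y) | X Y. X \<in> A \<and> Y \<in> B}"

definition Dhaus :: "(real^'m^'l) set set \<Rightarrow> (real^'m^'l) set set \<Rightarrow> real" where
  "Dhaus U V = (SUP X\<in>U. INF Y\<in>V. delta2 X Y)"

definition Popen :: "(real^'m^'l) set set \<Rightarrow> bool" where
  "Popen U \<longleftrightarrow> U \<subseteq> Pspace \<and>
     (\<forall>x\<in>U. \<exists>e>0. \<forall>y\<in>Pspace. delta2 x y < e \<longrightarrow> y \<in> U)"

definition Pborel :: "(real^'m^'l) set measure" where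
  "Pborel = sigma Pspace {U. Popen U}"

definition rho_continuous :: "((real^'m^'l) set \<Rightarrow> (real^'m^'l) set \<Rightarrow> real) \<Rightarrow> bool" where
  "rho_continuous \<rho> \<longleftrightarrow>
     (\<forall>A\<in>Pspace. \<forall>B\<in>Pspace. \<forall>e>0. \<exists>d>0. \<forall>A'\<in>Pspace. \<forall>B'\<in>Pspace.
        delta2 A A' < d \<and> delta2 B B' < d \<longrightarrow> \<bar>\<rho> A' B' - \<rho> A B\<bar> < e)"

text \<open>Sample Frechet function F_n(Z) = (1/n) sum_{i=1}^n rho(X_i,Z) (sample indexed from 0).\<close>
definition Fn :: "((real^'m^'l) set \<Rightarrow> (real^'m^'l) set \<Rightarrow> real) \<Rightarrow> (nat \<Rightarrow> (real^'m^'l) set)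
                   \<Rightarrow> nat \<Rightarrow> (real^'m^'l) set \<Rightarrow> real" where
  "Fn \<rho> xs n Z = (1 / real n) * (\<Sum>i<n. \<rho> (xs i) Z)"

definition Vn where
  "Vn \<rho> xs n = (INF Z\<in>Pspace. Fn \<rho> xs n Z)"

definition Fn_set where
  "Fn_set \<rho> xs n = {Z\<in>Pspace. Fn \<rho> xs n Z = Vn \<rho> xs n}"

definition FQ :: "((real^'m^'l) set \<Rightarrow> (real^'m^'l) set \<Rightarrow> real) \<Rightarrow> (real^'m^'l) set measure
                   \<Rightarrow> (real^'m^'l) set \<Rightarrow> real" where
  "FQ \<rho> Q Z = (\<integral>X. \<rho> X Z \<partial>Q)"

definition VQ where
  "VQ \<rho> Q = (INF Z\<in>Pspace. FQ \<rho> Q Z)"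

definition FQ_set where
  "FQ_set \<rho> Q = {Z\<in>Pspace. FQ \<rho> Q Z = VQ \<rho> Q}"

end

theory Submission
  imports Defs
begin

text \<open>
  For a fixed orbit Z, Fn(Z) is a sample mean of the bounded i.i.d. variables rho(X_i, Z), so it
  converges almost surely to FQ(Z) (Hoeffding plus Borel-Cantelli), simultaneously for all orbits
  of a countable dense set of matrices. Since rho is uniformly continuous on the compact matrix
  space, the functions Y \<mapsto> Fn(orbit Y) are equicontinuous, which upgrades this to uniform
  convergence. The rest is deterministic: uniform convergence of continuous functions on a compact
  set makes the minima converge, and eventually every minimiser of Fn lies within r of a minimiser
  of FQ, because away from the minimisers FQ stays a positive amount above its minimum.
\<close>

section \<open>Uniform limits of functions on compact sets\<close>

lemma abs_INF_diff_le:
  fixes f g :: "'a \<Rightarrow> real"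
  assumes "A \<noteq> {}" "bdd_below (f ` A)" "bdd_below (g ` A)" "\<And>x. x \<in> A \<Longrightarrow> \<bar>f x - g x\<bar> \<le> e"
  shows "\<bar>(INF x\<in>A. f x) - (INF x\<in>A. g x)\<bar> \<le> e"
proof -
  have "(INF x\<in>A. f x) - e \<le> g x" if "x \<in> A" for x
    using cINF_lower[OF assms(2) that] assms(4)[OF that] by linarith
  then have "(INF x\<in>A. f x) - e \<le> (INF x\<in>A. g x)"
    by (rule cINF_greatest[OF assms(1)])
  moreover have "(INF x\<in>A. g x) - e \<le> f x" if "x \<in> A" for x
    using cINF_lower[OF assms(3) that] assms(4)[OF that] by linarith
  then have "(INF x\<in>A. g x) - e \<le> (INF x\<in>A. f x)"
    by (rule cINF_greatest[OF assms(1)])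
  ultimately show ?thesis by linarith
qed

lemma continuous_on_compact_INF_attained:
  fixes f :: "'a::topological_space \<Rightarrow> real"
  assumes "compact K" "K \<noteq> {}" "continuous_on K f"
  obtains x where "x \<in> K" "f x = (INF y\<in>K. f y)"
proof -
  obtain x where "x \<in> K" "\<And>y. y \<in> K \<Longrightarrow> f x \<le> f y"
    using continuous_attains_inf[OF assms] by blast
  then have "(INF y\<in>K. f y) = f x"
    by (intro cInf_eq_minimum) auto
  then show ?thesis
    using that \<open>x \<in> K\<close> by simp
qed

lemma bdd_below_continuous_image:
  fixes f :: "'a::topological_space \<Rightarrow> real"
  assumes "compact K" "continuous_on K f"
  shows "bdd_below (f ` K)"
  using assms by (intro bounded_imp_bdd_below compact_imp_bounded compact_continuous_image)

lemma tendsto_INF_uniform_limit: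
  fixes f :: "nat \<Rightarrow> 'a::topological_space \<Rightarrow> real"
  assumes "compact K" "K \<noteq> {}" "\<And>n. continuous_on K (f n)" "continuous_on K g"
    and "uniform_limit K f g sequentially"
  shows "(\<lambda>n. INF x\<in>K. f n x) \<longlonglongrightarrow> (INF x\<in>K. g x)"
proof (rule tendstoI)
  fix e :: real
  assume "e > 0"
  then have "\<forall>\<^sub>F n in sequentially. \<forall>x\<in>K. dist (f n x) (g x) < e / 2"
    using assms(5) by (intro uniform_limitD) simp_all
  then show "\<forall>\<^sub>F n in sequentially. dist (INF x\<in>K. f n x) (INF x\<in>K. g x) < e"
  proof (rule eventually_mono)
    fix n
    assume "\<forall>x\<in>K. dist (f n x) (g x) < e / 2"
    then have "\<bar>(INF x\<in>K. f n x) - (INF x\<in>K. g x)\<bar> \<le> e / 2"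
      using assms by (intro abs_INF_diff_le bdd_below_continuous_image) (auto simp: dist_real_def)
    then show "dist (INF x\<in>K. f n x) (INF x\<in>K. g x) < e"
      using \<open>e > 0\<close> by (simp add: dist_real_def)
  qed
qed

lemma continuous_on_compact_argmin_gap:
  fixes g :: "'a::metric_space \<Rightarrow> real"
  assumes "compact K" "continuous_on K g" "r > 0"
  obtains \<gamma> where "\<gamma> > 0"
    "\<And>x. x \<in> K \<Longrightarrow> g x < (INF z\<in>K. g z) + \<gamma> \<Longrightarrow> \<exists>y\<in>K. g y = (INF z\<in>K. g z) \<and> dist x y < r"
proof -
  define C where "C = {y\<in>K. g y = (INF z\<in>K. g z)}"
  define K' where "K' = {x\<in>K. \<forall>y\<in>C. r \<le> dist x y}"
  have near: "\<exists>y\<in>K. g y = (INF z\<in>K. g z) \<and> dist x y < r" if "x \<in> K" "x \<notin> K'" for x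
    using that unfolding K'_def C_def by auto
  show ?thesis
  proof (cases "K' = {}")
    case True
    show ?thesis
      by (rule that[of 1]) (use True near in auto)
  next
    case False
    have "K' = K \<inter> (\<Inter>y\<in>C. {x. r \<le> dist x y})"
      unfolding K'_def by auto
    moreover have "closed (\<Inter>y\<in>C. {x. r \<le> dist x y})"
      by (intro closed_INT ballI closed_Collect_le continuous_intros)
    ultimately have "compact K'"
      using assms(1) by (simp add: compact_Int_closed)
    moreover have "continuous_on K' g"
      using assms(2) by (rule continuous_on_subset) (auto simp: K'_def)
    ultimately obtain x1 where x1: "x1 \<in> K'" "\<And>x. x \<in> K' \<Longrightarrow> g x1 \<le> g x"
      using continuous_attains_inf[OF _ False] by blast
    have "x1 \<notin> C"
      using x1(1) assms(3) unfolding K'_def by force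
    moreover have "(INF z\<in>K. g z) \<le> g x1"
      using x1(1) bdd_below_continuous_image[OF assms(1,2)] unfolding K'_def by (auto intro: cINF_lower)
    ultimately have gap: "(INF z\<in>K. g z) < g x1"
      using x1(1) unfolding C_def K'_def by force
    show ?thesis
    proof (rule that[of "g x1 - (INF z\<in>K. g z)"])
      show "g x1 - (INF z\<in>K. g z) > 0"
        using gap by simp
      fix x
      assume "x \<in> K" "g x < (INF z\<in>K. g z) + (g x1 - (INF z\<in>K. g z))"
      then show "\<exists>y\<in>K. g y = (INF z\<in>K. g z) \<and> dist x y < r"
        using near x1(2) by force
    qed
  qed
qed

lemma eventually_argmin_near_argmin:
  fixes f :: "nat \<Rightarrow> 'a::metric_space \<Rightarrow> real"
  assumes "compact K" "K \<noteq> {}" "\<And>n. continuous_on K (f n)" "continuous_on K g"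
    and "uniform_limit K f g sequentially" "r > 0"
  shows "\<forall>\<^sub>F n in sequentially. \<forall>x\<in>K. f n x = (INF z\<in>K. f n z) \<longrightarrow>
           (\<exists>y\<in>K. g y = (INF z\<in>K. g z) \<and> dist x y < r)"
proof -
  obtain \<gamma> where "\<gamma> > 0" and \<gamma>: "\<And>x. x \<in> K \<Longrightarrow> g x < (INF z\<in>K. g z) + \<gamma> \<Longrightarrow>
      \<exists>y\<in>K. g y = (INF z\<in>K. g z) \<and> dist x y < r"
    using continuous_on_compact_argmin_gap[OF assms(1,4,6)] by blast
  have "\<forall>\<^sub>F n in sequentially. \<forall>x\<in>K. dist (f n x) (g x) < \<gamma> / 2"
    using assms(5) \<open>\<gamma> > 0\<close> by (intro uniform_limitD) simp_all
  moreover have "\<forall>\<^sub>F n in sequentially. dist (INF z\<in>K. f n z) (INF z\<in>K. g z) < \<gamma> / 2"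
    using tendsto_INF_uniform_limit[OF assms(1-5)] \<open>\<gamma> > 0\<close> by (intro tendstoD) simp_all
  ultimately show ?thesis
  proof eventually_elim
    case (elim n)
    have "g x < (INF z\<in>K. g z) + \<gamma>" if "x \<in> K" "f n x = (INF z\<in>K. f n z)" for x
      using elim(1)[rule_format, OF that(1)] elim(2) that(2) unfolding dist_real_def abs_less_iff by linarith
    then show ?case
      using \<gamma> by blast
  qed
qed

lemma uniform_limit_if_equicontinuous_dense:
  fixes f :: "nat \<Rightarrow> 'a::metric_space \<Rightarrow> 'b::metric_space"
  assumes "compact K" "D \<subseteq> K" "K \<subseteq> closure D"
    and equicont: "\<And>e. e > 0 \<Longrightarrow> \<exists>d>0. \<forall>n. \<forall>x\<in>K. \<forall>y\<in>K. dist x y < d \<longrightarrow> dist (f n x) (f n y) < e"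
    and "uniformly_continuous_on K g"
    and "\<And>y. y \<in> D \<Longrightarrow> (\<lambda>n. f n y) \<longlonglongrightarrow> g y"
  shows "uniform_limit K f g sequentially"
proof (rule uniform_limitI)
  fix e :: real
  assume "e > 0"
  then have "e / 3 > 0"
    by simp
  obtain d1 where "d1 > 0" and d1: "\<forall>n. \<forall>x\<in>K. \<forall>y\<in>K. dist x y < d1 \<longrightarrow> dist (f n x) (f n y) < e / 3"
    using equicont[OF \<open>e / 3 > 0\<close>] by blast
  obtain d2 where "d2 > 0" and d2: "\<forall>x\<in>K. \<forall>y\<in>K. dist y x < d2 \<longrightarrow> dist (g y) (g x) < e / 3"
    using assms(5) \<open>e / 3 > 0\<close> unfolding uniformly_continuous_on_def by blast
  define d where "d = min d1 d2"
  have cover: "K \<subseteq> (\<Union>y\<in>D. ball y d)"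
  proof
    fix x
    assume "x \<in> K"
    then obtain y where "y \<in> D" "dist x y < d"
      using closure_approachableD[of x D d] assms(3) \<open>d1 > 0\<close> \<open>d2 > 0\<close> unfolding d_def by auto
    then show "x \<in> (\<Union>y\<in>D. ball y d)"
      by (auto simp: dist_commute)
  qed
  obtain C where "C \<subseteq> D" "finite C" and C: "K \<subseteq> (\<Union>y\<in>C. ball y d)"
    by (rule compactE_image[OF assms(1) _ cover]) simp_all
  have "\<forall>\<^sub>F n in sequentially. \<forall>y\<in>C. dist (f n y) (g y) < e / 3"
    using \<open>finite C\<close> \<open>C \<subseteq> D\<close> assms(6) \<open>e / 3 > 0\<close> by (intro eventually_ball_finite ballI tendstoD) auto
  then show "\<forall>\<^sub>F n in sequentially. \<forall>x\<in>K. dist (f n x) (g x) < e"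
  proof (rule eventually_mono, intro ballI)
    fix n x
    assume near: "\<forall>y\<in>C. dist (f n y) (g y) < e / 3" and "x \<in> K"
    then obtain y where "y \<in> C" "dist y x < d"
      using C by auto
    then have "y \<in> K"
      using \<open>C \<subseteq> D\<close> assms(2) by blast
    have "dist (f n x) (g x) \<le> dist (f n x) (f n y) + dist (f n y) (g y) + dist (g y) (g x)"
      using dist_triangle[of "f n x" "g x" "f n y"] dist_triangle[of "f n y" "g x" "g y"] by linarith
    also have "\<dots> < e / 3 + e / 3 + e / 3"
      using d1 d2 near \<open>x \<in> K\<close> \<open>y \<in> K\<close> \<open>y \<in> C\<close> \<open>dist y x < d\<close>
      unfolding d_def by (intro add_strict_mono) (auto simp: dist_commute)
    finally show "dist (f n x) (g x) < e"
      by simp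
  qed
qed

section \<open>A strong law of large numbers for bounded variables\<close>

lemma hoeffding_sample_mean:
  fixes Xs :: "nat \<Rightarrow> 'w \<Rightarrow> 'a" and f :: "'a \<Rightarrow> real"
  assumes "prob_space M" "\<And>i. Xs i \<in> measurable M N" "\<And>i. distr M N (Xs i) = Q"
    and "prob_space.indep_vars M (\<lambda>_. N) Xs UNIV"
    and "f \<in> borel_measurable N" "\<And>x. x \<in> space N \<Longrightarrow> \<bar>f x\<bar> \<le> B"
    and "n > 0" "e \<ge> 0"
  shows "measure M {w\<in>space M. e \<le> \<bar>(\<Sum>i<n. f (Xs i w)) / n - integral\<^sup>L Q f\<bar>}
           \<le> 2 * exp (- 2 * e\<^sup>2 / (2 * \<bar>B\<bar> + 2)\<^sup>2) ^ n"
proof -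
  interpret prob_space M by (rule assms(1))
  define Y where "Y i w = f (Xs i w)" for i w
  have [measurable]: "Y i \<in> borel_measurable M" for i
    unfolding Y_def using assms(2,5) by measurable
  have "distr M borel (Y i) = distr (distr M N (Xs i)) borel f" for i
    unfolding Y_def using assms(2,5) by (subst distr_distr) (simp_all add: comp_def)
  then have Y_distr: "distr M borel (Y i) = distr M borel (Y 0)" for i
    using assms(3) by simp
  have "indep_vars (\<lambda>_. borel) Y UNIV"
    unfolding Y_def using assms(4,5) by (rule indep_vars_compose2)
  then have "indep_vars (\<lambda>_. borel) Y {..<n}"
    by (rule indep_vars_subset) simp
  \<comment> \<open>The range is widened by 1 because Hoeffding's inequality needs a nondegenerate interval.\<close>
  moreover have "AE w in M. Y 0 w \<in> {- \<bar>B\<bar> - 1..\<bar>B\<bar> + 1}"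
  proof (rule AE_I2)
    fix w
    assume "w \<in> space M"
    then have "Xs 0 w \<in> space N"
      by (rule measurable_space[OF assms(2)])
    then show "Y 0 w \<in> {- \<bar>B\<bar> - 1..\<bar>B\<bar> + 1}"
      using assms(6)[of "Xs 0 w"] by (auto simp: Y_def)
  qed
  ultimately interpret Hoeffding_ineq_iid M "{..<n}" Y "Y 0" "- \<bar>B\<bar> - 1" "\<bar>B\<bar> + 1" "expectation (Y 0)"
    using Y_distr by unfold_locales simp_all
  have "expectation (Y 0) = integral\<^sup>L (distr M N (Xs 0)) f"
    unfolding Y_def using assms(2,5) by (rule integral_distr[symmetric])
  then have mean: "expectation (Y 0) = integral\<^sup>L Q f"
    using assms(3) by simp
  have "{..<n} \<noteq> {}" "- \<bar>B\<bar> - 1 < \<bar>B\<bar> + 1"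
    using assms(7) by auto
  from Hoeffding_ineq_abs_ge'[OF assms(8) this(2,1)]
  have "prob {w\<in>space M. e \<le> \<bar>(\<Sum>i<n. Y i w) / real n - integral\<^sup>L Q f\<bar>}
          \<le> 2 * exp (real n * (- 2 * e\<^sup>2 / (2 * \<bar>B\<bar> + 2)\<^sup>2))"
    by (simp add: mean algebra_simps)
  also have "exp (real n * (- 2 * e\<^sup>2 / (2 * \<bar>B\<bar> + 2)\<^sup>2)) = exp (- 2 * e\<^sup>2 / (2 * \<bar>B\<bar> + 2)\<^sup>2) ^ n"
    by (rule exp_of_nat_mult)
  finally show ?thesis
    by (simp add: Y_def)
qed

lemma AE_sample_mean_tendsto:
  fixes Xs :: "nat \<Rightarrow> 'w \<Rightarrow> 'a" and f :: "'a \<Rightarrow> real"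
  assumes "prob_space M" "\<And>i. Xs i \<in> measurable M N" "\<And>i. distr M N (Xs i) = Q"
    and "prob_space.indep_vars M (\<lambda>_. N) Xs UNIV"
    and "f \<in> borel_measurable N" "\<And>x. x \<in> space N \<Longrightarrow> \<bar>f x\<bar> \<le> B"
  shows "AE w in M. (\<lambda>n. (\<Sum>i<n. f (Xs i w)) / n) \<longlonglongrightarrow> integral\<^sup>L Q f"
proof -
  interpret prob_space M by (rule assms(1))
  define A where "A e n = {w\<in>space M. e \<le> \<bar>(\<Sum>i<n. f (Xs i w)) / n - integral\<^sup>L Q f\<bar>}" for e n
  have "AE w in M. \<forall>\<^sub>F n in sequentially. w \<in> space M - A e n" if "e > 0" for e
  proof (rule borel_cantelli_AE1)
    have [measurable]: "Xs i \<in> M \<rightarrow>\<^sub>M N" "f \<in> borel_measurable N" for i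
      by (fact assms(2,5))+
    show "A e n \<in> sets M" for n
      unfolding A_def by measurable
    then show "emeasure M (A e n) < \<infinity>" for n
      by (simp add: emeasure_eq_measure)
    define q where "q = exp (- 2 * e\<^sup>2 / (2 * \<bar>B\<bar> + 2)\<^sup>2)"
    have "q < 1"
      unfolding q_def using \<open>e > 0\<close> by (simp add: add_pos_nonneg)
    then have "summable (\<lambda>n. 2 * q ^ n)"
      unfolding q_def by (intro summable_mult summable_geometric) simp
    moreover have "norm (measure M (A e n)) \<le> 2 * q ^ n" if "n \<ge> 1" for n
      using hoeffding_sample_mean[OF assms, of n e] that \<open>e > 0\<close> unfolding A_def q_def by simp
    ultimately show "summable (\<lambda>n. measure M (A e n))"
      by (rule summable_comparison_test')
  qed
  then have "AE w in M. \<forall>k::nat. \<forall>\<^sub>F n in sequentially. w \<in> space M - A (1 / Suc k) n"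
    by (simp add: AE_all_countable)
  then show ?thesis
  proof (rule eventually_mono)
    fix w
    assume ev: "\<forall>k::nat. \<forall>\<^sub>F n in sequentially. w \<in> space M - A (1 / Suc k) n"
    show "(\<lambda>n. (\<Sum>i<n. f (Xs i w)) / n) \<longlonglongrightarrow> integral\<^sup>L Q f"
    proof (rule tendstoI)
      fix r :: real
      assume "r > 0"
      then obtain k :: nat where k: "1 / Suc k < r"
        using reals_Archimedean by (auto simp: inverse_eq_divide)
      show "\<forall>\<^sub>F n in sequentially. dist ((\<Sum>i<n. f (Xs i w)) / n) (integral\<^sup>L Q f) < r"
        using ev[rule_format, of k] by eventually_elim (use k in \<open>auto simp: A_def dist_real_def\<close>)
    qed
  qed
qed

section \<open>The partition space\<close>

lemma closed_Xspace: "closed (Xspace :: (real^'m^'l) set)"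
proof -
  have "Xspace = (\<Inter>i. \<Inter>j. {X::real^'m^'l. 0 \<le> X $ i $ j} \<inter> {X. X $ i $ j \<le> 1}) \<inter>
                 (\<Inter>j. {X. (\<Sum>i\<in>UNIV. X $ i $ j) = 1})"
    unfolding Xspace_def by auto
  also have "closed \<dots>"
    by (intro closed_Int closed_INT ballI closed_Collect_le closed_Collect_eq continuous_intros)
  finally show ?thesis .
qed

lemma bounded_Xspace: "bounded (Xspace :: (real^'m^'l) set)"
proof -
  have "norm X \<le> real CARD('l) * real CARD('m)" if "X \<in> Xspace" for X :: "real^'m^'l"
  proof -
    have "norm X \<le> (\<Sum>i\<in>UNIV. norm (X $ i))"
      by (simp add: norm_vec_def L2_set_le_sum)
    also have "\<dots> \<le> (\<Sum>i\<in>UNIV. \<Sum>j\<in>UNIV. \<bar>X $ i $ j\<bar>)"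
      by (intro sum_mono norm_le_l1_cart)
    also have "\<dots> \<le> (\<Sum>i\<in>(UNIV::'l set). \<Sum>j\<in>(UNIV::'m set). 1)"
      using that by (intro sum_mono) (auto simp: Xspace_def)
    finally show ?thesis by simp
  qed
  then show ?thesis
    unfolding bounded_iff by blast
qed

lemma compact_Xspace: "compact (Xspace :: (real^'m^'l) set)"
  using closed_Xspace bounded_Xspace compact_eq_bounded_closed by blast

lemma Xspace_nonempty: "(Xspace :: (real^'m^'l) set) \<noteq> {}"
proof -
  fix a :: 'l
  have "(\<chi> i j. if i = a then 1 else 0) \<in> (Xspace :: (real^'m^'l) set)"
    by (auto simp: Xspace_def if_distrib sum.delta cong: if_cong)
  then show ?thesis by blast
qed

lemma in_orbit_self: "X \<in> orbit X"
proof -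
  have "(mat 1 :: real^'l^'l) \<in> perm_matrices"
    unfolding perm_matrices_def mat_def by (auto intro!: exI[of _ id] permutes_id)
  then show ?thesis
    unfolding orbit_def by (metis (mono_tags, lifting) matrix_mul_lid mem_Collect_eq)
qed

lemma orbit_in_Pspace: "X \<in> Xspace \<Longrightarrow> orbit X \<in> Pspace"
  unfolding Pspace_def by blast

lemma INF_Pspace_eq: "(INF Z\<in>Pspace. f Z) = (INF Y\<in>Xspace. f (orbit Y))"
  unfolding Pspace_def image_image ..

lemma delta2_le_dist: "X \<in> A \<Longrightarrow> Y \<in> B \<Longrightarrow> delta2 A B \<le> dist X Y"
  unfolding delta2_def dist_norm by (rule cInf_lower) (auto intro: bdd_belowI[of _ 0])

lemma delta2_orbit_le: "delta2 (orbit X) (orbit Y) \<le> dist X Y"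
  by (intro delta2_le_dist in_orbit_self)

lemma delta2_nonneg: "A \<in> Pspace \<Longrightarrow> B \<in> Pspace \<Longrightarrow> 0 \<le> delta2 A B"
  unfolding delta2_def Pspace_def by (rule cInf_greatest) (auto intro: in_orbit_self)

lemma delta2_refl: "Z \<in> Pspace \<Longrightarrow> delta2 Z Z = 0"
  using delta2_nonneg[of Z Z] delta2_orbit_le[of X X for X] unfolding Pspace_def
  by (auto intro: antisym)

lemma space_Pborel: "space Pborel = Pspace"
  unfolding Pborel_def by (simp add: space_measure_of_conv)

lemma sets_Pborel: "sets Pborel = sigma_sets Pspace {U. Popen U}"
  unfolding Pborel_def by (rule sets_measure_of) (auto simp: Popen_def)

lemma continuous_on_rho_orbit:
  fixes \<rho> :: "(real^'m^'l) set \<Rightarrow> (real^'m^'l) set \<Rightarrow> real"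
  assumes "rho_continuous \<rho>"
  shows "continuous_on (Xspace \<times> Xspace) (\<lambda>(X, Y). \<rho> (orbit X) (orbit Y))"
  unfolding continuous_on_iff
proof (intro ballI allI impI)
  fix p :: "(real^'m^'l) \<times> (real^'m^'l)" and e :: real
  assume "p \<in> Xspace \<times> Xspace" and "0 < e"
  then obtain X Y where p: "p = (X, Y)" "X \<in> Xspace" "Y \<in> Xspace" by blast
  obtain d where "d > 0" and d: "\<forall>A'\<in>Pspace. \<forall>B'\<in>Pspace.
      delta2 (orbit X) A' < d \<and> delta2 (orbit Y) B' < d \<longrightarrow> \<bar>\<rho> A' B' - \<rho> (orbit X) (orbit Y)\<bar> < e"
    using assms \<open>0 < e\<close> orbit_in_Pspace[OF p(2)] orbit_in_Pspace[OF p(3)]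
    unfolding rho_continuous_def by blast
  have "dist (\<rho> (orbit X') (orbit Y')) (\<rho> (orbit X) (orbit Y)) < e"
    if "X' \<in> Xspace" "Y' \<in> Xspace" "dist (X', Y') (X, Y) < d" for X' Y'
  proof -
    have "delta2 (orbit X) (orbit X') < d" "delta2 (orbit Y) (orbit Y') < d"
      using delta2_orbit_le[of X X'] delta2_orbit_le[of Y Y'] dist_fst_le[of "(X', Y')" "(X, Y)"]
        dist_snd_le[of "(X', Y')" "(X, Y)"] that(3) by (simp_all add: dist_commute)
    then show ?thesis
      using d orbit_in_Pspace[OF that(1)] orbit_in_Pspace[OF that(2)] by (simp add: dist_real_def)
  qed
  then show "\<exists>d>0. \<forall>p'\<in>Xspace \<times> Xspace. dist p' p < d \<longrightarrow>
      dist ((\<lambda>(X, Y). \<rho> (orbit X) (orbit Y)) p') ((\<lambda>(X, Y). \<rho> (orbit X) (orbit Y)) p) < e"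
    using \<open>d > 0\<close> p by auto
qed

lemma rho_bounded:
  fixes \<rho> :: "(real^'m^'l) set \<Rightarrow> (real^'m^'l) set \<Rightarrow> real"
  assumes "rho_continuous \<rho>"
  obtains B where "\<And>A Z. A \<in> Pspace \<Longrightarrow> Z \<in> Pspace \<Longrightarrow> \<bar>\<rho> A Z\<bar> \<le> B"
proof -
  have "bounded ((\<lambda>(X, Y). \<rho> (orbit X) (orbit Y)) ` (Xspace \<times> Xspace))"
    by (intro compact_imp_bounded compact_continuous_image continuous_on_rho_orbit assms
        compact_Times compact_Xspace)
  then obtain B where "\<And>X Y. X \<in> Xspace \<Longrightarrow> Y \<in> Xspace \<Longrightarrow> \<bar>\<rho> (orbit X) (orbit Y)\<bar> \<le> B"
    unfolding bounded_iff by auto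
  then show ?thesis
    using that unfolding Pspace_def by blast
qed

lemma rho_orbit_uniformly_continuous:
  fixes \<rho> :: "(real^'m^'l) set \<Rightarrow> (real^'m^'l) set \<Rightarrow> real"
  assumes "rho_continuous \<rho>" "e > 0"
  obtains d where "d > 0" "\<And>A Y Y'. A \<in> Pspace \<Longrightarrow> Y \<in> Xspace \<Longrightarrow> Y' \<in> Xspace \<Longrightarrow>
      dist Y Y' < d \<Longrightarrow> \<bar>\<rho> A (orbit Y) - \<rho> A (orbit Y')\<bar> < e"
proof -
  have "uniformly_continuous_on (Xspace \<times> Xspace) (\<lambda>(X, Y). \<rho> (orbit X) (orbit Y))"
    by (intro compact_uniformly_continuous continuous_on_rho_orbit assms compact_Times compact_Xspace)
  then obtain d where "d > 0" and d: "\<And>p p'. p \<in> Xspace \<times> Xspace \<Longrightarrow> p' \<in> Xspace \<times> Xspace \<Longrightarrow>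
      dist p' p < d \<Longrightarrow> dist ((\<lambda>(X, Y). \<rho> (orbit X) (orbit Y)) p') ((\<lambda>(X, Y). \<rho> (orbit X) (orbit Y)) p) < e"
    unfolding uniformly_continuous_on_def using assms(2) by blast
  have "\<bar>\<rho> (orbit X) (orbit Y) - \<rho> (orbit X) (orbit Y')\<bar> < e"
    if "X \<in> Xspace" "Y \<in> Xspace" "Y' \<in> Xspace" "dist Y Y' < d" for X Y Y'
    using d[of "(X, Y')" "(X, Y)"] that by (simp add: dist_Pair_Pair dist_real_def dist_commute)
  then show ?thesis
    using that \<open>d > 0\<close> unfolding Pspace_def by blast
qed

lemma borel_measurable_rho:
  fixes \<rho> :: "(real^'m^'l) set \<Rightarrow> (real^'m^'l) set \<Rightarrow> real"
  assumes "rho_continuous \<rho>" and Z: "Z \<in> Pspace"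
  shows "(\<lambda>A. \<rho> A Z) \<in> borel_measurable Pborel"
proof (rule borel_measurableI)
  fix S :: "real set"
  assume "open S"
  have "Popen ((\<lambda>A. \<rho> A Z) -` S \<inter> Pspace)"
    unfolding Popen_def
  proof (intro conjI ballI)
    fix A assume A: "A \<in> (\<lambda>A. \<rho> A Z) -` S \<inter> Pspace"
    obtain e where "e > 0" and e: "\<And>y. dist y (\<rho> A Z) < e \<Longrightarrow> y \<in> S"
      using \<open>open S\<close> A unfolding open_dist by blast
    obtain d where "d > 0" and d: "\<forall>A'\<in>Pspace. \<forall>B'\<in>Pspace. delta2 A A' < d \<and> delta2 Z B' < d \<longrightarrow>
        \<bar>\<rho> A' B' - \<rho> A Z\<bar> < e"
      using assms A \<open>e > 0\<close> unfolding rho_continuous_def by blast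
    then show "\<exists>d>0. \<forall>y\<in>Pspace. delta2 A y < d \<longrightarrow> y \<in> (\<lambda>A. \<rho> A Z) -` S \<inter> Pspace"
      using \<open>d > 0\<close> d e Z delta2_refl[OF Z] by (auto simp: dist_real_def)
  qed auto
  then show "(\<lambda>A. \<rho> A Z) -` S \<inter> space Pborel \<in> sets Pborel"
    by (simp add: space_Pborel sets_Pborel sigma_sets.Basic)
qed

section \<open>Frechet functions\<close>

lemma abs_Fn_diff_le:
  fixes \<rho> :: "(real^'m^'l) set \<Rightarrow> (real^'m^'l) set \<Rightarrow> real"
  assumes "\<And>i. xs i \<in> Pspace" "e \<ge> 0" "\<And>A. A \<in> Pspace \<Longrightarrow> \<bar>\<rho> A Z - \<rho> A Z'\<bar> \<le> e"
  shows "\<bar>Fn \<rho> xs n Z - Fn \<rho> xs n Z'\<bar> \<le> e"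
proof -
  have "\<bar>Fn \<rho> xs n Z - Fn \<rho> xs n Z'\<bar> = \<bar>\<Sum>i<n. \<rho> (xs i) Z - \<rho> (xs i) Z'\<bar> / real n"
    unfolding Fn_def sum_subtractf by (simp add: diff_divide_distrib[symmetric])
  also have "\<dots> \<le> (\<Sum>i<n. e) / real n"
    by (intro divide_right_mono order_trans[OF sum_abs sum_mono] assms) simp
  also have "\<dots> \<le> e"
    using assms(2) by simp
  finally show ?thesis .
qed

lemma integrable_rho:
  fixes \<rho> :: "(real^'m^'l) set \<Rightarrow> (real^'m^'l) set \<Rightarrow> real"
  assumes "rho_continuous \<rho>" "prob_space Q" "sets Q = sets Pborel" "Z \<in> Pspace"
  shows "integrable Q (\<lambda>A. \<rho> A Z)"
proof -
  interpret prob_space Q by (rule assms(2))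
  obtain B where "\<And>A Z. A \<in> Pspace \<Longrightarrow> Z \<in> Pspace \<Longrightarrow> \<bar>\<rho> A Z\<bar> \<le> B"
    using rho_bounded[OF assms(1)] by blast
  moreover have "(\<lambda>A. \<rho> A Z) \<in> borel_measurable Q"
    using borel_measurable_rho[OF assms(1,4)] measurable_cong_sets[OF assms(3) refl] by blast
  moreover have "space Q = Pspace"
    using sets_eq_imp_space_eq[OF assms(3)] by (simp add: space_Pborel)
  ultimately show ?thesis
    using assms(4) by (intro integrable_const_bound[where B=B] AE_I2) auto
qed

lemma abs_FQ_diff_le:
  fixes \<rho> :: "(real^'m^'l) set \<Rightarrow> (real^'m^'l) set \<Rightarrow> real"
  assumes "rho_continuous \<rho>" "prob_space Q" "sets Q = sets Pborel" "Z \<in> Pspace" "Z' \<in> Pspace"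
    and "\<And>A. A \<in> Pspace \<Longrightarrow> \<bar>\<rho> A Z - \<rho> A Z'\<bar> \<le> e"
  shows "\<bar>FQ \<rho> Q Z - FQ \<rho> Q Z'\<bar> \<le> e"
proof -
  interpret prob_space Q by (rule assms(2))
  have iZ: "integrable Q (\<lambda>A. \<rho> A Z)" and iZ': "integrable Q (\<lambda>A. \<rho> A Z')"
    using integrable_rho[OF assms(1-3)] assms(4,5) by blast+
  then have int: "integrable Q (\<lambda>A. \<rho> A Z - \<rho> A Z')"
    by (rule Bochner_Integration.integrable_diff)
  have "space Q = Pspace"
    using sets_eq_imp_space_eq[OF assms(3)] by (simp add: space_Pborel)
  have "(\<integral>A. \<bar>\<rho> A Z - \<rho> A Z'\<bar> \<partial>Q) \<le> e"
  proof (rule integral_le_const)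
    show "integrable Q (\<lambda>A. \<bar>\<rho> A Z - \<rho> A Z'\<bar>)"
      using int by (rule integrable_abs)
    show "AE A in Q. \<bar>\<rho> A Z - \<rho> A Z'\<bar> \<le> e"
      using assms(6) \<open>space Q = Pspace\<close> by (intro AE_I2) simp
  qed
  moreover have "FQ \<rho> Q Z - FQ \<rho> Q Z' = (\<integral>A. \<rho> A Z - \<rho> A Z' \<partial>Q)"
    unfolding FQ_def using iZ iZ' by (rule Bochner_Integration.integral_diff[symmetric])
  ultimately show ?thesis
    using integral_abs_bound[of Q "\<lambda>A. \<rho> A Z - \<rho> A Z'"] by linarith
qed

lemma Fn_orbit_equicontinuous:
  fixes \<rho> :: "(real^'m^'l) set \<Rightarrow> (real^'m^'l) set \<Rightarrow> real"
  assumes "rho_continuous \<rho>" "\<And>i. xs i \<in> Pspace" "e > 0"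
  shows "\<exists>d>0. \<forall>n. \<forall>Y\<in>Xspace. \<forall>Y'\<in>Xspace. dist Y Y' < d \<longrightarrow>
           dist (Fn \<rho> xs n (orbit Y)) (Fn \<rho> xs n (orbit Y')) < e"
proof -
  obtain d where "d > 0" and d: "\<And>A Y Y'. A \<in> Pspace \<Longrightarrow> Y \<in> Xspace \<Longrightarrow> Y' \<in> Xspace \<Longrightarrow>
      dist Y Y' < d \<Longrightarrow> \<bar>\<rho> A (orbit Y) - \<rho> A (orbit Y')\<bar> < e / 2"
    using rho_orbit_uniformly_continuous[OF assms(1), of "e / 2"] assms(3) by auto
  have "dist (Fn \<rho> xs n (orbit Y)) (Fn \<rho> xs n (orbit Y')) < e"
    if "Y \<in> Xspace" "Y' \<in> Xspace" "dist Y Y' < d" for n and Y Y' :: "real^'m^'l"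
  proof -
    have "\<bar>Fn \<rho> xs n (orbit Y) - Fn \<rho> xs n (orbit Y')\<bar> \<le> e / 2"
      using assms(3) d[OF _ that] by (intro abs_Fn_diff_le assms(2)) (auto intro: less_imp_le)
    then show ?thesis
      using assms(3) by (simp add: dist_real_def)
  qed
  then show ?thesis
    using \<open>d > 0\<close> by blast
qed

lemma uniformly_continuous_on_FQ_orbit:
  fixes \<rho> :: "(real^'m^'l) set \<Rightarrow> (real^'m^'l) set \<Rightarrow> real"
  assumes "rho_continuous \<rho>" "prob_space Q" "sets Q = sets Pborel"
  shows "uniformly_continuous_on Xspace (\<lambda>Y. FQ \<rho> Q (orbit Y))"
  unfolding uniformly_continuous_on_def
proof (intro allI impI)
  fix e :: real
  assume "e > 0"
  then obtain d where "d > 0" and d: "\<And>A Y Y'. A \<in> Pspace \<Longrightarrow> Y \<in> Xspace \<Longrightarrow> Y' \<in> Xspace \<Longrightarrow>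
      dist Y Y' < d \<Longrightarrow> \<bar>\<rho> A (orbit Y) - \<rho> A (orbit Y')\<bar> < e / 2"
    using rho_orbit_uniformly_continuous[OF assms(1), of "e / 2"] by auto
  have "\<bar>FQ \<rho> Q (orbit Y') - FQ \<rho> Q (orbit Y)\<bar> \<le> e / 2"
    if "Y \<in> Xspace" "Y' \<in> Xspace" "dist Y' Y < d" for Y Y'
    using d[OF _ that(2,1,3)] orbit_in_Pspace[OF that(1)] orbit_in_Pspace[OF that(2)]
    by (intro abs_FQ_diff_le[OF assms]) (auto intro: less_imp_le)
  then show "\<exists>d>0. \<forall>Y\<in>Xspace. \<forall>Y'\<in>Xspace. dist Y' Y < d \<longrightarrow>
      dist (FQ \<rho> Q (orbit Y')) (FQ \<rho> Q (orbit Y)) < e"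
    using \<open>d > 0\<close> \<open>e > 0\<close> by (fastforce simp: dist_real_def)
qed

section \<open>Consistency\<close>

lemma abs_Dhaus_le:
  assumes "U \<noteq> {}" "U \<subseteq> Pspace" "V \<subseteq> Pspace" "\<And>Z. Z \<in> U \<Longrightarrow> \<exists>W\<in>V. delta2 Z W \<le> r"
  shows "\<bar>Dhaus U V\<bar> \<le> r"
proof -
  have "V \<noteq> {}"
    using assms(1,4) by blast
  have bdd: "bdd_below (delta2 Z ` V)" if "Z \<in> U" for Z
    using that assms(2,3) delta2_nonneg by (intro bdd_belowI2[of _ 0]) blast
  have inf_le: "(INF W\<in>V. delta2 Z W) \<le> r" if "Z \<in> U" for Z
    using assms(4)[OF that] cINF_lower[OF bdd[OF that]] by (meson order_trans)
  have inf_nonneg: "0 \<le> (INF W\<in>V. delta2 Z W)" if "Z \<in> U" for Z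
    using that assms(2,3) delta2_nonneg by (intro cINF_greatest[OF \<open>V \<noteq> {}\<close>]) blast
  obtain Z where "Z \<in> U"
    using assms(1) by blast
  have "Dhaus U V \<le> r"
    unfolding Dhaus_def using assms(1) inf_le by (rule cSUP_least)
  moreover have "0 \<le> Dhaus U V"
    unfolding Dhaus_def using inf_nonneg[OF \<open>Z \<in> U\<close>] \<open>Z \<in> U\<close> inf_le
    by (intro order_trans[OF _ cSUP_upper] bdd_aboveI2) auto
  ultimately show ?thesis
    by simp
qed

lemma continuous_on_Fn_orbit:
  fixes \<rho> :: "(real^'m^'l) set \<Rightarrow> (real^'m^'l) set \<Rightarrow> real"
  assumes "rho_continuous \<rho>" "\<And>i. xs i \<in> Pspace"
  shows "continuous_on Xspace (\<lambda>Y. Fn \<rho> xs n (orbit Y))"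
  unfolding continuous_on_iff
proof (intro ballI allI impI)
  fix Y :: "real^'m^'l" and e :: real
  assume "Y \<in> Xspace" "0 < e"
  then show "\<exists>d>0. \<forall>Y'\<in>Xspace. dist Y' Y < d \<longrightarrow> dist (Fn \<rho> xs n (orbit Y')) (Fn \<rho> xs n (orbit Y)) < e"
    using Fn_orbit_equicontinuous[where xs=xs, OF assms \<open>0 < e\<close>] by blast
qed

lemma Fn_set_nonempty:
  fixes \<rho> :: "(real^'m^'l) set \<Rightarrow> (real^'m^'l) set \<Rightarrow> real"
  assumes "rho_continuous \<rho>" "\<And>i. xs i \<in> Pspace"
  shows "Fn_set \<rho> xs n \<noteq> {}"
proof -
  obtain Y where "Y \<in> Xspace" "Fn \<rho> xs n (orbit Y) = (INF Y\<in>Xspace. Fn \<rho> xs n (orbit Y))"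
    by (rule continuous_on_compact_INF_attained[OF compact_Xspace Xspace_nonempty
        continuous_on_Fn_orbit[OF assms]])
  then show ?thesis
    unfolding Fn_set_def Vn_def INF_Pspace_eq using orbit_in_Pspace by blast
qed

lemma Vn_tendsto_VQ_if_uniform_limit:
  fixes \<rho> :: "(real^'m^'l) set \<Rightarrow> (real^'m^'l) set \<Rightarrow> real"
  assumes "rho_continuous \<rho>" "prob_space Q" "sets Q = sets Pborel" "\<And>i. xs i \<in> Pspace"
    and "uniform_limit Xspace (\<lambda>n Y. Fn \<rho> xs n (orbit Y)) (\<lambda>Y. FQ \<rho> Q (orbit Y)) sequentially"
  shows "(\<lambda>n. Vn \<rho> xs n) \<longlonglongrightarrow> VQ \<rho> Q"
  unfolding Vn_def VQ_def INF_Pspace_eq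
  by (intro tendsto_INF_uniform_limit compact_Xspace Xspace_nonempty continuous_on_Fn_orbit
      uniformly_continuous_imp_continuous[OF uniformly_continuous_on_FQ_orbit] assms)

lemma Dhaus_tendsto_0_if_uniform_limit:
  fixes \<rho> :: "(real^'m^'l) set \<Rightarrow> (real^'m^'l) set \<Rightarrow> real"
  assumes "rho_continuous \<rho>" "prob_space Q" "sets Q = sets Pborel" "\<And>i. xs i \<in> Pspace"
    and "uniform_limit Xspace (\<lambda>n Y. Fn \<rho> xs n (orbit Y)) (\<lambda>Y. FQ \<rho> Q (orbit Y)) sequentially"
  shows "(\<lambda>n. Dhaus (Fn_set \<rho> xs n) (FQ_set \<rho> Q)) \<longlonglongrightarrow> 0"
proof (rule tendstoI)
  fix e :: real
  assume "e > 0"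
  have "\<forall>\<^sub>F n in sequentially. \<forall>Y\<in>Xspace. Fn \<rho> xs n (orbit Y) = Vn \<rho> xs n \<longrightarrow>
      (\<exists>Y'\<in>Xspace. FQ \<rho> Q (orbit Y') = VQ \<rho> Q \<and> dist Y Y' < e / 2)"
    unfolding Vn_def VQ_def INF_Pspace_eq using \<open>e > 0\<close>
    by (intro eventually_argmin_near_argmin compact_Xspace Xspace_nonempty continuous_on_Fn_orbit
        uniformly_continuous_imp_continuous[OF uniformly_continuous_on_FQ_orbit] assms) simp_all
  then show "\<forall>\<^sub>F n in sequentially. dist (Dhaus (Fn_set \<rho> xs n) (FQ_set \<rho> Q)) 0 < e"
  proof (rule eventually_mono)
    fix n
    assume near: "\<forall>Y\<in>Xspace. Fn \<rho> xs n (orbit Y) = Vn \<rho> xs n \<longrightarrow>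
        (\<exists>Y'\<in>Xspace. FQ \<rho> Q (orbit Y') = VQ \<rho> Q \<and> dist Y Y' < e / 2)"
    have "\<exists>W\<in>FQ_set \<rho> Q. delta2 Z W \<le> e / 2" if Z: "Z \<in> Fn_set \<rho> xs n" for Z
    proof -
      obtain Y where "Y \<in> Xspace" "Z = orbit Y" "Fn \<rho> xs n (orbit Y) = Vn \<rho> xs n"
        using Z unfolding Fn_set_def Pspace_def by blast
      then obtain Y' where "Y' \<in> Xspace" "FQ \<rho> Q (orbit Y') = VQ \<rho> Q" "dist Y Y' < e / 2"
        using near by blast
      moreover have "delta2 Z (orbit Y') \<le> e / 2"
        using \<open>Z = orbit Y\<close> delta2_orbit_le[of Y Y'] \<open>dist Y Y' < e / 2\<close> by simp
      ultimately show ?thesis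
        unfolding FQ_set_def using orbit_in_Pspace by blast
    qed
    then have "\<bar>Dhaus (Fn_set \<rho> xs n) (FQ_set \<rho> Q)\<bar> \<le> e / 2"
      using Fn_set_nonempty[OF assms(1,4)] by (intro abs_Dhaus_le) (auto simp: Fn_set_def FQ_set_def)
    then show "dist (Dhaus (Fn_set \<rho> xs n) (FQ_set \<rho> Q)) 0 < e"
      using \<open>e > 0\<close> by simp
  qed
qed

lemma AE_uniform_limit_Fn_orbit:
  fixes M :: "'w measure" and Xs :: "nat \<Rightarrow> 'w \<Rightarrow> (real^'m^'l) set"
    and \<rho> :: "(real^'m^'l) set \<Rightarrow> (real^'m^'l) set \<Rightarrow> real"
  assumes "prob_space M" "prob_space Q" "sets Q = sets Pborel"
    and "\<And>i. Xs i \<in> measurable M Pborel" "\<And>i. distr M Pborel (Xs i) = Q"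
    and "prob_space.indep_vars M (\<lambda>_. Pborel) Xs UNIV" "rho_continuous \<rho>"
  shows "AE w in M. uniform_limit Xspace (\<lambda>n Y. Fn \<rho> (\<lambda>i. Xs i w) n (orbit Y)) (\<lambda>Y. FQ \<rho> Q (orbit Y))
           sequentially"
proof -
  obtain D :: "(real^'m^'l) set" where "countable D" "D \<subseteq> Xspace" "Xspace \<subseteq> closure D"
    using separable by blast
  obtain B where B: "\<And>A Z. A \<in> Pspace \<Longrightarrow> Z \<in> Pspace \<Longrightarrow> \<bar>\<rho> A Z\<bar> \<le> B"
    using rho_bounded[OF assms(7)] by blast
  have "AE w in M. (\<lambda>n. Fn \<rho> (\<lambda>i. Xs i w) n (orbit Y)) \<longlonglongrightarrow> FQ \<rho> Q (orbit Y)" if "Y \<in> D" for Y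
  proof -
    have "orbit Y \<in> Pspace"
      using that \<open>D \<subseteq> Xspace\<close> orbit_in_Pspace by blast
    then have "\<bar>\<rho> A (orbit Y)\<bar> \<le> B" if "A \<in> space Pborel" for A
      using B that by (simp add: space_Pborel)
    then have "AE w in M. (\<lambda>n. (\<Sum>i<n. \<rho> (Xs i w) (orbit Y)) / n) \<longlonglongrightarrow> (\<integral>A. \<rho> A (orbit Y) \<partial>Q)"
      by (rule AE_sample_mean_tendsto[OF assms(1,4,5,6) borel_measurable_rho[OF assms(7) \<open>orbit Y \<in> Pspace\<close>]])
    then show ?thesis
      by (simp add: Fn_def FQ_def)
  qed
  then have "AE w in M. \<forall>Y\<in>D. (\<lambda>n. Fn \<rho> (\<lambda>i. Xs i w) n (orbit Y)) \<longlonglongrightarrow> FQ \<rho> Q (orbit Y)"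
    using \<open>countable D\<close> by (simp add: AE_ball_countable)
  with AE_space show ?thesis
  proof eventually_elim
    case (elim w)
    then have Xs_w: "Xs i w \<in> Pspace" for i
      using measurable_space[OF assms(4)] by (simp add: space_Pborel)
    show ?case
      by (rule uniform_limit_if_equicontinuous_dense[OF compact_Xspace \<open>D \<subseteq> Xspace\<close>
          \<open>Xspace \<subseteq> closure D\<close> Fn_orbit_equicontinuous[OF assms(7) Xs_w]
          uniformly_continuous_on_FQ_orbit[OF assms(7,2,3)]
          elim(2)[rule_format]])
  qed
qed

theorem theorem3:
  fixes M :: "'w measure"
    and Q :: "(real^'m^'l) set measure"
    and Xs :: "nat \<Rightarrow> 'w \<Rightarrow> (real^'m^'l) set"
    and \<rho> :: "(real^'m^'l) set \<Rightarrow> (real^'m^'l) set \<Rightarrow> real"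
  assumes "CARD('l) \<le> CARD('m)"
    and "prob_space M"
    and "prob_space Q"
    and "sets Q = sets Pborel"
    and "\<And>i. Xs i \<in> measurable M Pborel"
    and "\<And>i. distr M Pborel (Xs i) = Q"
    and "prob_space.indep_vars M (\<lambda>_. Pborel) Xs UNIV"
    and "rho_continuous \<rho>"
  shows "(AE w in M. (\<lambda>n. Dhaus (Fn_set \<rho> (\<lambda>i. Xs i w) n) (FQ_set \<rho> Q)) \<longlonglongrightarrow> 0) \<and>
         (AE w in M. (\<lambda>n. Vn \<rho> (\<lambda>i. Xs i w) n) \<longlonglongrightarrow> VQ \<rho> Q)"
proof -
  have "AE w in M. (\<lambda>n. Dhaus (Fn_set \<rho> (\<lambda>i. Xs i w) n) (FQ_set \<rho> Q)) \<longlonglongrightarrow> 0 \<and>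
                   (\<lambda>n. Vn \<rho> (\<lambda>i. Xs i w) n) \<longlonglongrightarrow> VQ \<rho> Q"
    using AE_space AE_uniform_limit_Fn_orbit[OF assms(2-8)]
  proof eventually_elim
    case (elim w)
    then have "Xs i w \<in> Pspace" for i
      using measurable_space[OF assms(5)] by (simp add: space_Pborel)
    then show ?case
      using Dhaus_tendsto_0_if_uniform_limit[OF assms(8,3,4) _ elim(2)]
        Vn_tendsto_VQ_if_uniform_limit[OF assms(8,3,4) _ elim(2)] by blast
  qed
  then show ?thesis
    by auto
qed

end
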